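(* For every $p\in[0,1]$ and $k\ge1$, there is a (randomized) Locate algorithm that runs in $k$ rounds, succeeds with probability $p$ on every input, and asks at most $p\,k\,n^{1/k}$ queries in expectation on any vector of length $n$.
   Context: Locate problem in the rank query model: there is a vector $\vec{x}=(x_1,\ldots,x_n)$ whose ranks form an unknown permutation of $\{1,\ldots,n\}$; an index $i$ is given and the goal is to output $\mathrm{rank}(x_i)$. Queries have the form "How is $\mathrm{rank}(x_j)$ compared to $m$?", with answer "$<$", "$=$" or "$>$". An algorithm runs in $k$ rounds if in each of $k$ rounds it submits a set of queries chosen depending only on answers of earlier rounds (and its randomness), then receives all answers. A randomized algorithm is a distribution over deterministic algorithms. *)

theory Defs
  imports "HOL-Probability.Probability"
begin

text \<open>Rank query model. The ranks of the input vector are given by a permutation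
  sigma of {1..n} (sigma j = rank of x_j). A query (j, m) asks how rank(x_j) compares to m.\<close>

datatype answer = ALess | AEq | AGreater

type_synonym query = "nat \<times> nat"
type_synonym history = "query \<Rightarrow> answer option"

definition ans :: "(nat \<Rightarrow> nat) \<Rightarrow> query \<Rightarrow> answer" where
  "ans \<sigma> q = (if \<sigma> (fst q) < snd q then ALess
               else if \<sigma> (fst q) = snd q then AEq else AGreater)"

text \<open>A deterministic round-based algorithm: in round r it submits the query set
  qs r h, where h records all answers received in earlier rounds; finally it outputs
  out h applied to all received answers.\<close>
record det_alg =
  qs :: "nat \<Rightarrow> history \<Rightarrow> query set"
  out :: "history \<Rightarrow> nat"

definition valid_alg :: "det_alg \<Rightarrow> bool" where
  "valid_alg A \<longleftrightarrow> (\<forall>r h. finite (qs A r h))"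

fun hist :: "det_alg \<Rightarrow> (nat \<Rightarrow> nat) \<Rightarrow> nat \<Rightarrow> history" where
  "hist A \<sigma> 0 = Map.empty"
| "hist A \<sigma> (Suc r) = hist A \<sigma> r ++
     (\<lambda>q. if q \<in> qs A r (hist A \<sigma> r) then Some (ans \<sigma> q) else None)"

definition result :: "det_alg \<Rightarrow> (nat \<Rightarrow> nat) \<Rightarrow> nat \<Rightarrow> nat" where
  "result A \<sigma> k = out A (hist A \<sigma> k)"

definition num_queries :: "det_alg \<Rightarrow> (nat \<Rightarrow> nat) \<Rightarrow> nat \<Rightarrow> nat" where
  "num_queries A \<sigma> k = (\<Sum>r<k. card (qs A r (hist A \<sigma> r)))"

end

theory Submission imports Defs begin

(* Put b = floor(n powr (1/k)) + 1, so that b^k > n and the number rank(x_i) - 1 has k digits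
   in base b. The search algorithm keeps the lower bound L for rank(x_i) - 1 certified by the
   answers so far; in round r it compares rank(x_i) with the b - 1 thresholds L + d b^(k-1-r) + 1,
   which reveals the next digit. After k rounds L = rank(x_i) - 1, using k (b - 1) <= k n^(1/k)
   queries. For success probability p, run this algorithm with probability p and otherwise ask
   nothing and output 0, which is never a rank. *)

lemma Max_union_eq_Max_insert:
  fixes X N :: "'a::linorder set"
  assumes "finite X" "X \<noteq> {}" "finite N"
  shows "Max (X \<union> N) = Max (insert (Max X) N)"
  using assms by (cases "N = {}") (simp_all add: Max.union)

lemma mult_le_imp_le_div_mult:
  fixes c w x :: nat
  assumes "c * w \<le> x"
  shows "c * w \<le> x div w * w"
proof (cases "w = 0")
  case False
  then have "c \<le> x div w"
    using assms by (simp add: less_eq_div_iff_mult_less_eq)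
  then show ?thesis
    by (rule mult_right_mono) simp
qed simp

lemma Max_multiples_below:
  fixes x w b :: nat
  assumes "b \<ge> 1"
  defines "base \<equiv> x div (w * b) * (w * b)"
  shows "Max (insert base {base + d * w | d. d \<in> {1..<b} \<and> base + d * w \<le> x}) = x div w * w"
proof (rule Max_eqI)
  have "x div w = x div (w * b) * b + x div w mod b"
    by (simp add: div_mult2_eq)
  then have round: "x div w * w = base + x div w mod b * w"
    unfolding base_def by (metis add_mult_distrib mult.assoc mult.commute)
  have "x div w mod b < b"
    using assms(1) by simp
  then show "x div w * w \<in> insert base {base + d * w | d. d \<in> {1..<b} \<and> base + d * w \<le> x}"
    using round div_times_less_eq_dividend[of x w] by (cases "x div w mod b = 0") auto
  fix y
  assume y: "y \<in> insert base {base + d * w | d. d \<in> {1..<b} \<and> base + d * w \<le> x}"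
  obtain d where "y = base + d * w" "y \<le> x"
  proof (cases "y = base")
    case True
    then show ?thesis
      using that[of 0] by (simp add: base_def)
  next
    case False
    then show ?thesis
      using that y by blast
  qed
  then have "y = (x div (w * b) * b + d) * w" "y \<le> x"
    by (simp_all add: base_def algebra_simps)
  then show "y \<le> x div w * w"
    using mult_le_imp_le_div_mult by simp
qed simp

lemma less_power_Suc_floor_root:
  assumes "k \<ge> 1"
  shows "n < (nat \<lfloor>real n powr (1 / real k)\<rfloor> + 1) ^ k"
proof -
  define t where "t = real n powr (1 / real k)"
  have "t \<ge> 0"
    by (simp add: t_def)
  have "real n = t ^ k"
  proof (cases "n = 0")
    case False
    then show ?thesis
      using assms by (simp add: t_def powr_power)
  qed (use assms in \<open>simp add: t_def\<close>)
  also have "\<dots> < real (nat \<lfloor>t\<rfloor> + 1) ^ k"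
    using \<open>t \<ge> 0\<close> assms by (intro power_strict_mono) linarith+
  finally show ?thesis
    unfolding t_def by (metis of_nat_less_iff of_nat_power)
qed

lemma prob_bernoulli_choice:
  assumes "0 \<le> p" "p \<le> 1" "a \<in> S" "b \<notin> S"
  shows "measure_pmf.prob (map_pmf (\<lambda>c. if c then a else b) (bernoulli_pmf p)) S = p"
proof -
  have "(\<lambda>c. if c then a else b) -` S = {True}"
    using assms(3,4) by (auto split: if_splits)
  then show ?thesis
    using assms(1,2) by (simp add: measure_pmf_single)
qed

lemma nn_integral_bernoulli_choice:
  assumes "0 \<le> p" "p \<le> 1"
  shows "(\<integral>\<^sup>+ x. f x \<partial>map_pmf (\<lambda>c. if c then a else b) (bernoulli_pmf p))
           = ennreal p * f a + ennreal (1 - p) * f b"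
  using assms by (simp add: ac_simps)

definition asked :: "det_alg \<Rightarrow> (nat \<Rightarrow> nat) \<Rightarrow> nat \<Rightarrow> query set" where
  "asked A \<sigma> r = (\<Union>r'<r. qs A r' (hist A \<sigma> r'))"

lemma asked_0 [simp]: "asked A \<sigma> 0 = {}"
  by (simp add: asked_def)

lemma asked_Suc: "asked A \<sigma> (Suc r) = asked A \<sigma> r \<union> qs A r (hist A \<sigma> r)"
  by (auto simp: asked_def lessThan_Suc)

lemma finite_asked: "valid_alg A \<Longrightarrow> finite (asked A \<sigma> r)"
  by (auto simp: asked_def valid_alg_def)

lemma hist_eq_asked: "hist A \<sigma> r q = (if q \<in> asked A \<sigma> r then Some (ans \<sigma> q) else None)"
  by (induction r) (auto simp: asked_Suc map_add_def split: option.splits)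

definition lower_bound :: "nat \<Rightarrow> history \<Rightarrow> nat" where
  "lower_bound i h = Max (insert 0 {m - 1 | m. h (i, m) \<in> {Some AEq, Some AGreater}})"

definition certified_lower_bounds :: "det_alg \<Rightarrow> (nat \<Rightarrow> nat) \<Rightarrow> nat \<Rightarrow> nat \<Rightarrow> nat set" where
  "certified_lower_bounds A \<sigma> i r = insert 0 {m - 1 | m. (i, m) \<in> asked A \<sigma> r \<and> m \<le> \<sigma> i}"

lemma hist_certifies_lower_bound:
  "hist A \<sigma> r (i, m) \<in> {Some AEq, Some AGreater} \<longleftrightarrow> (i, m) \<in> asked A \<sigma> r \<and> m \<le> \<sigma> i"
  by (auto simp: hist_eq_asked ans_def)

lemma lower_bound_hist: "lower_bound i (hist A \<sigma> r) = Max (certified_lower_bounds A \<sigma> i r)"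
  unfolding lower_bound_def certified_lower_bounds_def hist_certifies_lower_bound ..

lemma finite_certified_lower_bounds:
  assumes "valid_alg A"
  shows "finite (certified_lower_bounds A \<sigma> i r)"
proof -
  have "{m - 1 | m. (i, m) \<in> asked A \<sigma> r \<and> m \<le> \<sigma> i} \<subseteq> (\<lambda>q. snd q - 1) ` asked A \<sigma> r"
    by force
  then show ?thesis
    unfolding certified_lower_bounds_def using finite_asked[OF assms] finite_subset by blast
qed

lemma certified_lower_bounds_Suc:
  "certified_lower_bounds A \<sigma> i (Suc r) =
     certified_lower_bounds A \<sigma> i r \<union> {m - 1 | m. (i, m) \<in> qs A r (hist A \<sigma> r) \<and> m \<le> \<sigma> i}"
  by (auto simp: certified_lower_bounds_def asked_Suc)

definition base_search :: "nat \<Rightarrow> nat \<Rightarrow> nat \<Rightarrow> det_alg" where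
  "base_search i k b =
     \<lparr>qs = (\<lambda>r h. (\<lambda>d. (i, lower_bound i h + d * b ^ (k - Suc r) + 1)) ` {1..<b}),
      out = (\<lambda>h. lower_bound i h + 1)\<rparr>"

lemma valid_base_search: "valid_alg (base_search i k b)"
  by (simp add: valid_alg_def base_search_def)

lemma lower_bound_base_search:
  assumes "r \<le> k" "b \<ge> 1" "1 \<le> \<sigma> i" "\<sigma> i - 1 < b ^ k"
  shows "lower_bound i (hist (base_search i k b) \<sigma> r) = (\<sigma> i - 1) div b ^ (k - r) * b ^ (k - r)"
  using assms(1)
proof (induction r)
  case 0
  then show ?case
    using assms(4) by (simp add: lower_bound_def)
next
  case (Suc r)
  define x where "x = \<sigma> i - 1"
  define w where "w = b ^ (k - Suc r)"
  define base where "base = x div (w * b) * (w * b)"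
  let ?C = "certified_lower_bounds (base_search i k b) \<sigma> i"
  have "k - r = Suc (k - Suc r)"
    using Suc.prems by simp
  then have "b ^ (k - r) = w * b"
    by (simp add: w_def mult.commute)
  then have IH: "Max (?C r) = base"
    using Suc by (simp add: lower_bound_hist base_def x_def)
  have queries: "qs (base_search i k b) r (hist (base_search i k b) \<sigma> r)
                  = (\<lambda>d. (i, base + d * w + 1)) ` {1..<b}"
    using IH by (simp add: base_search_def lower_bound_hist w_def)
  define N where "N = {base + d * w | d. d \<in> {1..<b} \<and> base + d * w \<le> x}"
  have "?C (Suc r) = ?C r \<union> N"
    using assms(3) unfolding certified_lower_bounds_Suc queries N_def x_def by force
  moreover have "finite N"
    by (rule finite_subset[of _ "(\<lambda>d. base + d * w) ` {1..<b}"]) (auto simp: N_def)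
  moreover have "?C r \<noteq> {}"
    by (simp add: certified_lower_bounds_def)
  ultimately have "Max (?C (Suc r)) = Max (insert base N)"
    using IH Max_union_eq_Max_insert finite_certified_lower_bounds[OF valid_base_search] by metis
  also have "\<dots> = x div w * w"
    unfolding base_def N_def using assms(2) by (rule Max_multiples_below)
  finally show ?case
    unfolding lower_bound_hist x_def w_def .
qed

lemma result_base_search:
  assumes "b \<ge> 1" "1 \<le> \<sigma> i" "\<sigma> i - 1 < b ^ k"
  shows "result (base_search i k b) \<sigma> k = \<sigma> i"
  using lower_bound_base_search[of k k b \<sigma> i] assms by (simp add: result_def base_search_def)

lemma num_queries_base_search: "num_queries (base_search i k b) \<sigma> k \<le> k * (b - 1)"
proof -
  have "card (qs (base_search i k b) r h) \<le> b - 1" for r h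
    using card_image_le[of "{1..<b}"] by (simp add: base_search_def)
  then have "num_queries (base_search i k b) \<sigma> k \<le> (\<Sum>r<k. b - 1)"
    unfolding num_queries_def by (intro sum_mono)
  then show ?thesis
    by simp
qed

lemma deterministic_locate:
  assumes "k \<ge> 1" "i \<in> {1..n}"
  obtains A where "valid_alg A"
    "\<And>\<sigma>. \<sigma> permutes {1..n} \<Longrightarrow> result A \<sigma> k = \<sigma> i"
    "\<And>\<sigma>. real (num_queries A \<sigma> k) \<le> real k * real n powr (1 / real k)"
proof
  define t where "t = real n powr (1 / real k)"
  define b where "b = nat \<lfloor>t\<rfloor> + 1"
  show "valid_alg (base_search i k b)"
    by (rule valid_base_search)
  fix \<sigma>
  show "result (base_search i k b) \<sigma> k = \<sigma> i" if "\<sigma> permutes {1..n}"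
  proof (rule result_base_search)
    have "\<sigma> i \<in> {1..n}"
      using permutes_in_image[OF that] assms(2) by blast
    moreover have "n < b ^ k"
      unfolding b_def t_def using assms(1) by (rule less_power_Suc_floor_root)
    ultimately show "1 \<le> \<sigma> i" "\<sigma> i - 1 < b ^ k"
      by auto
  qed (simp add: b_def)
  have "real (b - 1) \<le> t"
    unfolding b_def t_def by simp
  then have "real (k * (b - 1)) \<le> real k * t"
    by (simp add: mult_left_mono)
  then show "real (num_queries (base_search i k b) \<sigma> k) \<le> real k * real n powr (1 / real k)"
    using num_queries_base_search[of i k b \<sigma>] unfolding t_def by (meson of_nat_le_iff order_trans)
qed

definition idle_alg :: det_alg where
  "idle_alg = \<lparr>qs = (\<lambda>r h. {}), out = (\<lambda>h. 0)\<rparr>"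

lemma valid_idle_alg: "valid_alg idle_alg"
  by (simp add: valid_alg_def idle_alg_def)

lemma result_idle_alg: "result idle_alg \<sigma> k = 0"
  by (simp add: result_def idle_alg_def)

lemma num_queries_idle_alg: "num_queries idle_alg \<sigma> k = 0"
  by (simp add: num_queries_def idle_alg_def)

theorem proposition2:
  fixes p :: real and k n i :: nat
  assumes "0 \<le> p" "p \<le> 1" "k \<ge> 1" "i \<in> {1..n}"
  shows "\<exists>D :: det_alg pmf. (\<forall>A\<in>set_pmf D. valid_alg A) \<and>
           (\<forall>\<sigma>. \<sigma> permutes {1..n} \<longrightarrow>
              measure_pmf.prob D {A. result A \<sigma> k = \<sigma> i} = p \<and>
              (\<integral>\<^sup>+ A. ennreal (real (num_queries A \<sigma> k)) \<partial>(measure_pmf D))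
                 \<le> ennreal (p * real k * real n powr (1 / real k)))"
proof -
  obtain A where A: "valid_alg A"
    "\<And>\<sigma>. \<sigma> permutes {1..n} \<Longrightarrow> result A \<sigma> k = \<sigma> i"
    "\<And>\<sigma>. real (num_queries A \<sigma> k) \<le> real k * real n powr (1 / real k)"
    using deterministic_locate[OF assms(3,4)] by blast
  define D where "D = map_pmf (\<lambda>c. if c then A else idle_alg) (bernoulli_pmf p)"
  show ?thesis
  proof (intro exI[of _ D] conjI allI impI ballI)
    show "valid_alg A'" if "A' \<in> set_pmf D" for A'
      using that A(1) valid_idle_alg by (auto simp: D_def)
    fix \<sigma>
    assume \<sigma>: "\<sigma> permutes {1..n}"
    then have "\<sigma> i \<noteq> 0"
      using permutes_in_image[OF \<sigma>, of i] assms(4) by auto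
    then show "measure_pmf.prob D {A'. result A' \<sigma> k = \<sigma> i} = p"
      unfolding D_def using assms(1,2) A(2)[OF \<sigma>]
      by (intro prob_bernoulli_choice) (auto simp: result_idle_alg)
    have "(\<integral>\<^sup>+ A'. ennreal (real (num_queries A' \<sigma> k)) \<partial>(measure_pmf D))
            = ennreal p * ennreal (real (num_queries A \<sigma> k))"
      using assms(1,2)
      by (simp add: D_def nn_integral_bernoulli_choice num_queries_idle_alg mult.commute)
    also have "\<dots> \<le> ennreal p * ennreal (real k * real n powr (1 / real k))"
      using A(3) by (intro mult_left_mono ennreal_leI) simp_all
    also have "\<dots> = ennreal (p * real k * real n powr (1 / real k))"
      using assms(1) by (simp add: ennreal_mult mult.assoc)
    finally show "(\<integral>\<^sup>+ A'. ennreal (real (num_queries A' \<sigma> k)) \<partial>(measure_pmf D))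
                    \<le> ennreal (p * real k * real n powr (1 / real k))" .
  qed
qed

end
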